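(* The element $s=\sum_{n\ge0}t^ns_n\in H$ is transcendental over $K$.
   Context: $p$ is a prime, $\mathbb F$ an algebraic closure of $\mathbb F_p$, $t$ an indeterminate, $H=\mathbb F((t^{\mathbb Q}))$ the Hahn field of series $\sum_{q\in\mathbb Q}a_qt^q$ ($a_q\in\mathbb F$) with well-ordered support, and $K=\bigcup_{N\ge1}\mathbb F((t^{1/N}))\subset H$ the Newton–Puiseux field. For $n\ge0$, $s_n=\sum_{j\ge n}\binom{j}{n}t^{-1/p^{j+1}}\in H$, with binomial coefficients read in $\mathbb F_p$. *)

theory Defs
  imports "HOL-Computational_Algebra.Polynomial"
begin

text \<open>Hahn series over a field F with rational exponents, represented by their
coefficient function rat => F. The Hahn field H is the set of those with well-ordered support.\<close>

definition hahn :: "(rat \<Rightarrow> 'a::zero) set" where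
  "hahn = {f. wf {(x, y). f x \<noteq> 0 \<and> f y \<noteq> 0 \<and> x < y}}"

definition hzero :: "rat \<Rightarrow> 'a::zero" where
  "hzero = (\<lambda>q. 0)"

definition hone :: "rat \<Rightarrow> 'a::{zero,one}" where
  "hone = (\<lambda>q. if q = 0 then 1 else 0)"

definition hmonom :: "'a::zero \<Rightarrow> rat \<Rightarrow> rat \<Rightarrow> 'a" where
  "hmonom a e = (\<lambda>q. if q = e then a else 0)"

text \<open>Cauchy product (the index set is finite for elements of hahn)\<close>
definition hmul :: "(rat \<Rightarrow> 'a::comm_ring_1) \<Rightarrow> (rat \<Rightarrow> 'a) \<Rightarrow> rat \<Rightarrow> 'a" where
  "hmul f g = (\<lambda>q. \<Sum>a\<in>{a. f a \<noteq> 0 \<and> g (q - a) \<noteq> 0}. f a * g (q - a))"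

primrec hpow :: "(rat \<Rightarrow> 'a::comm_ring_1) \<Rightarrow> nat \<Rightarrow> rat \<Rightarrow> 'a" where
  "hpow f 0 = hone"
| "hpow f (Suc n) = hmul f (hpow f n)"

text \<open>Sum of a (summable) family of Hahn series: coefficientwise, each coefficient
being a finite sum for a summable family.\<close>
definition hsum :: "('i \<Rightarrow> rat \<Rightarrow> 'a::comm_monoid_add) \<Rightarrow> rat \<Rightarrow> 'a" where
  "hsum F = (\<lambda>q. \<Sum>i\<in>{i. F i q \<noteq> 0}. F i q)"

text \<open>Newton-Puiseux field K: union over N of Laurent series in t^(1/N).\<close>
definition puiseux :: "(rat \<Rightarrow> 'a::zero) set" where
  "puiseux = {f. \<exists>N::nat. N > 0 \<and> (\<exists>m::int. \<forall>q. f q \<noteq> 0 \<longrightarrow>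
        (\<exists>k::int. q = of_int k / of_nat N) \<and> of_int m \<le> q)}"

definition s_n :: "nat \<Rightarrow> nat \<Rightarrow> rat \<Rightarrow> 'a::comm_ring_1" where
  "s_n p n = hsum (\<lambda>j::nat. if n \<le> j then hmonom (of_nat (j choose n)) (- 1 / (of_nat p ^ (j + 1))) else hzero)"

definition s_ser :: "nat \<Rightarrow> rat \<Rightarrow> 'a::comm_ring_1" where
  "s_ser p = hsum (\<lambda>n::nat. hmul (hmonom 1 (of_nat n)) (s_n p n))"

definition transcendental_over_puiseux :: "(rat \<Rightarrow> 'a::comm_ring_1) \<Rightarrow> bool" where
  "transcendental_over_puiseux x \<longleftrightarrow>
     (\<forall>(c :: nat \<Rightarrow> rat \<Rightarrow> 'a) d. (\<forall>i\<le>d. c i \<in> puiseux) \<and> (\<exists>i\<le>d. c i \<noteq> hzero) \<longrightarrow>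
        hsum (\<lambda>i. if i \<le> d then hmul (c i) (hpow x i) else hzero) \<noteq> hzero)"

end

(* In characteristic p, Frobenius acts on Hahn series by x^(p^k) = sum_q c_q^(p^k) t^(p^k q);
   since the coefficients binom(j,n) of s lie in the prime field, s^(p^k) has the coefficient
   binom(j,n) at the exponent p^k (n - 1/p^(j+1)).
   Suppose P(s) = 0 for a nonzero P of degree D over the Puiseux field K.  Pseudo-division by P
   reduces nonzero multiples of X, X^p, ..., X^(p^D) to D + 1 polynomials of degree < D, which are
   linearly dependent over K; hence sum_k b_k s^(p^k) = 0 with b_k in K not all zero.
   Choose N with all b_k in F((t^(1/N))) and m >= N, so that p^(m+1) does not divide N.  Keeping
   only the exponents in -1/p^(m+1) + (1/N)Z commutes with multiplication by the b_k, and keeps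
   exactly the terms of s^(p^k) with j = m + k, which sum to t^(-1/p^(m+1)) (1 + t^(p^k))^(m+k).
   So sum_k b_k (1 + t^(p^k))^k (1 + t^(p^k))^m = 0 for all m >= N, and a Vandermonde argument
   in the distinct elements 1 + t^(p^k) gives b_k = 0. *)

theory Submission
  imports Defs "HOL-Computational_Algebra.Primes" "HOL-Library.Set_Algebras"
begin

section \<open>Well-ordered sets\<close>

definition well_ordered :: "'a::linorder set \<Rightarrow> bool" where
  "well_ordered X \<longleftrightarrow> wf {(x, y). x \<in> X \<and> y \<in> X \<and> x < y}"

abbreviation support :: "(rat \<Rightarrow> 'a::zero) \<Rightarrow> rat set" where
  "support f \<equiv> {q. f q \<noteq> 0}"

lemma hahn_iff_well_ordered: "f \<in> hahn \<longleftrightarrow> well_ordered (support f)"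
  by (simp add: hahn_def well_ordered_def)

lemma well_ordered_iff_no_descending_chain:
  "well_ordered X \<longleftrightarrow> \<not> (\<exists>g. \<forall>i. g i \<in> X \<and> g (Suc i) < g i)"
  unfolding well_ordered_def wf_iff_no_infinite_down_chain by auto

lemma well_ordered_descending_chainE:
  assumes "well_ordered X" "\<And>i. g i \<in> X" "\<And>i. g (Suc i) < g i"
  shows False
  using assms unfolding well_ordered_iff_no_descending_chain by blast

lemma well_ordered_iff_least:
  "well_ordered X \<longleftrightarrow> (\<forall>S \<subseteq> X. S \<noteq> {} \<longrightarrow> (\<exists>m\<in>S. \<forall>x\<in>S. m \<le> x))"
proof
  assume wo: "well_ordered X"
  show "\<forall>S \<subseteq> X. S \<noteq> {} \<longrightarrow> (\<exists>m\<in>S. \<forall>x\<in>S. m \<le> x)"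
  proof (intro allI impI)
    fix S assume S: "S \<subseteq> X" "S \<noteq> {}"
    then obtain x where "x \<in> S" by blast
    with wo obtain z where z: "z \<in> S" "\<And>y. (y, z) \<in> {(x, y). x \<in> X \<and> y \<in> X \<and> x < y} \<Longrightarrow> y \<notin> S"
      unfolding well_ordered_def by (rule wfE_min) blast+
    have "z \<le> y" if "y \<in> S" for y
      using z S(1) that by (metis (mono_tags, lifting) case_prodI mem_Collect_eq not_le subsetD)
    with z(1) show "\<exists>m\<in>S. \<forall>x\<in>S. m \<le> x" by blast
  qed
next
  assume least: "\<forall>S \<subseteq> X. S \<noteq> {} \<longrightarrow> (\<exists>m\<in>S. \<forall>x\<in>S. m \<le> x)"
  show "well_ordered X"
    unfolding well_ordered_def
  proof (rule wfI_min)
    fix x and Q :: "'a set" assume "x \<in> Q"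
    show "\<exists>z\<in>Q. \<forall>y. (y, z) \<in> {(x, y). x \<in> X \<and> y \<in> X \<and> x < y} \<longrightarrow> y \<notin> Q"
    proof (cases "Q \<inter> X = {}")
      case True
      then show ?thesis using \<open>x \<in> Q\<close> by blast
    next
      case False
      then obtain m where "m \<in> Q \<inter> X" "\<forall>y\<in>Q \<inter> X. m \<le> y"
        using least by (meson inf_le2)
      then show ?thesis by (auto simp: not_less[symmetric])
    qed
  qed
qed

lemma well_ordered_least:
  assumes "well_ordered X" "x \<in> X"
  obtains m where "m \<in> X" "\<And>y. y \<in> X \<Longrightarrow> m \<le> y"
proof -
  have "\<exists>m\<in>X. \<forall>y\<in>X. m \<le> y"
    using assms(1)[unfolded well_ordered_iff_least, rule_format, OF order_refl] assms(2) by blast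
  then show thesis using that by blast
qed

lemma well_ordered_subset: "well_ordered X \<Longrightarrow> Y \<subseteq> X \<Longrightarrow> well_ordered Y"
  unfolding well_ordered_def by (erule wf_subset) auto

lemma well_ordered_finite: "finite X \<Longrightarrow> well_ordered X"
  unfolding well_ordered_iff_least
proof (intro allI impI)
  fix S assume "finite X" "S \<subseteq> X" "S \<noteq> {}"
  have "finite S" using finite_subset[OF \<open>S \<subseteq> X\<close> \<open>finite X\<close>] .
  with \<open>S \<noteq> {}\<close> show "\<exists>m\<in>S. \<forall>x\<in>S. m \<le> x" by (intro bexI[of _ "Min S"]) auto
qed

lemma well_ordered_Un:
  assumes "well_ordered X" "well_ordered Y"
  shows "well_ordered (X \<union> Y)"
  unfolding well_ordered_iff_least
proof (intro allI impI)
  fix S assume S: "S \<subseteq> X \<union> Y" "S \<noteq> {}"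
  have least_in: "\<exists>m\<in>S \<inter> Z. \<forall>x\<in>S \<inter> Z. m \<le> x" if "well_ordered Z" "S \<inter> Z \<noteq> {}" for Z
    using that unfolding well_ordered_iff_least by blast
  consider "S \<inter> X = {}" | "S \<inter> Y = {}" | "S \<inter> X \<noteq> {}" "S \<inter> Y \<noteq> {}" by blast
  then show "\<exists>m\<in>S. \<forall>x\<in>S. m \<le> x"
  proof cases
    case 1
    then have "S \<subseteq> Y" using S(1) by blast
    then show ?thesis using assms(2) S(2) unfolding well_ordered_iff_least by blast
  next
    case 2
    then have "S \<subseteq> X" using S(1) by blast
    then show ?thesis using assms(1) S(2) unfolding well_ordered_iff_least by blast
  next
    case 3
    then obtain m1 m2 where m: "m1 \<in> S \<inter> X" "\<forall>x\<in>S \<inter> X. m1 \<le> x" "m2 \<in> S \<inter> Y" "\<forall>x\<in>S \<inter> Y. m2 \<le> x"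
      using least_in assms by metis
    have "min m1 m2 \<le> x" if "x \<in> S" for x
      using that S(1) m by (metis IntI Un_iff min.coboundedI1 min.coboundedI2 subsetD)
    moreover have "min m1 m2 \<in> S" using m by (simp add: min_def)
    ultimately show ?thesis by blast
  qed
qed

lemma well_ordered_range_mono:
  fixes f :: "nat \<Rightarrow> 'a::linorder"
  assumes "mono f"
  shows "well_ordered (range f)"
  unfolding well_ordered_iff_no_descending_chain
proof
  assume "\<exists>g. \<forall>i. g i \<in> range f \<and> g (Suc i) < g i"
  then obtain g where g: "\<And>i. g i \<in> range f" "\<And>i. g (Suc i) < g i" by blast
  have "\<forall>i. \<exists>k. g i = f k" using g(1) by blast
  then obtain n where "\<And>i. g i = f (n i)" by metis
  with g(2) have "\<And>i. f (n (Suc i)) < f (n i)" by simp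
  then have "\<And>i. n (Suc i) < n i"
    using assms by (meson monoD not_le)
  then show False
    using wf_less unfolding wf_iff_no_infinite_down_chain by blast
qed

lemma descending_chain_less:
  fixes g :: "nat \<Rightarrow> 'a::order"
  assumes "\<And>i. g (Suc i) < g i" "m < n"
  shows "g n < g m"
  using assms(2)
proof (induction n)
  case (Suc n)
  have "g (Suc n) < g n" by (rule assms(1))
  with Suc show ?case by (cases "m = n") auto
qed simp

lemma well_ordered_incseq_subseq:
  fixes g :: "nat \<Rightarrow> 'a::linorder"
  assumes "well_ordered X" "\<And>i. g i \<in> X"
  obtains r where "strict_mono r" "incseq (g \<circ> r)"
proof -
  obtain r where r: "strict_mono r" "monoseq (g \<circ> r)"
    using seq_monosub[of g] unfolding o_def by blast
  show thesis
  proof (cases "incseq (g \<circ> r)")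
    case True
    with r(1) show thesis by (rule that)
  next
    case False
    then have dec: "decseq (g \<circ> r)" using r(2) by (simp add: monoseq_iff)
    have "well_ordered (range (g \<circ> r))"
      using assms by (intro well_ordered_subset[OF assms(1)]) auto
    then obtain m where "m \<in> range (g \<circ> r)" "\<And>y. y \<in> range (g \<circ> r) \<Longrightarrow> m \<le> y"
      using well_ordered_least by blast
    then obtain i0 where i0: "\<And>i. g (r i0) \<le> g (r i)" by auto
    have "g (r (i0 + i)) = g (r i0)" for i
    proof (rule antisym)
      show "g (r (i0 + i)) \<le> g (r i0)" using dec by (simp add: decseq_def)
    qed (rule i0)
    then have "incseq (g \<circ> (\<lambda>i. r (i0 + i)))" by (simp add: incseq_def o_def)
    moreover have "strict_mono (\<lambda>i. r (i0 + i))" using r(1) by (simp add: strict_mono_def)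
    ultimately show thesis using that by blast
  qed
qed

lemma well_ordered_plus:
  fixes X Y :: "'a::linordered_ab_group_add set"
  assumes "well_ordered X" "well_ordered Y"
  shows "well_ordered (X + Y)"
  unfolding well_ordered_iff_no_descending_chain
proof
  assume "\<exists>g. \<forall>i. g i \<in> X + Y \<and> g (Suc i) < g i"
  then obtain g where g: "\<And>i. g i \<in> X + Y" "\<And>i. g (Suc i) < g i" by blast
  have "\<forall>i. \<exists>a b. a \<in> X \<and> b \<in> Y \<and> g i = a + b"
    using g(1) by (blast elim: set_plus_elim)
  then obtain a b where ab: "\<And>i. a i \<in> X" "\<And>i. b i \<in> Y" "\<And>i. g i = a i + b i"
    by metis
  obtain r where r: "strict_mono r" "incseq (a \<circ> r)"
    using well_ordered_incseq_subseq[OF assms(1) ab(1)] .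
  have "b (r (Suc i)) < b (r i)" for i
  proof -
    have "g (r (Suc i)) < g (r i)" using descending_chain_less[of g, OF g(2)] r(1) by (simp add: strict_mono_def)
    moreover have "a (r i) \<le> a (r (Suc i))" using incseq_SucD[OF r(2)] by simp
    ultimately show ?thesis unfolding ab(3) using add_mono not_le by metis
  qed
  then show False
    using well_ordered_descending_chainE[OF assms(2), of "\<lambda>i. b (r i)"] ab(2) by simp
qed

lemma well_ordered_convolution_finite:
  fixes X Y :: "'a::linordered_ab_group_add set"
  assumes "well_ordered X" "well_ordered Y"
  shows "finite {a \<in> X. q - a \<in> Y}"
proof (rule ccontr)
  assume "infinite {a \<in> X. q - a \<in> Y}"
  then obtain f :: "nat \<Rightarrow> 'a" where "inj f" "range f \<subseteq> {a \<in> X. q - a \<in> Y}"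
    using infinite_countable_subset by blast
  then have f: "inj f" "\<And>i. f i \<in> X" "\<And>i. q - f i \<in> Y" by auto
  obtain r where r: "strict_mono r" "incseq (f \<circ> r)"
    using well_ordered_incseq_subseq[OF assms(1) f(2)] .
  have "f (r i) < f (r (Suc i))" for i
  proof -
    have "r i \<noteq> r (Suc i)" using r(1) by (simp add: strict_mono_eq)
    then have "f (r i) \<noteq> f (r (Suc i))" using f(1) by (simp add: inj_eq)
    moreover have "f (r i) \<le> f (r (Suc i))" using incseq_SucD[OF r(2)] by simp
    ultimately show ?thesis by simp
  qed
  then show False
    using well_ordered_descending_chainE[OF assms(2), of "\<lambda>i. q - f (r i)"] f(3) by simp
qed


section \<open>Hahn series\<close>

lemma hmul_eq_sum:
  assumes "finite A" "{a. f a \<noteq> 0 \<and> g (q - a) \<noteq> 0} \<subseteq> A"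
  shows "hmul f g q = (\<Sum>a\<in>A. f a * g (q - a))"
  unfolding hmul_def by (rule sum.mono_neutral_left) (use assms in auto)

lemma hmul_nonzeroE:
  assumes "hmul f g q \<noteq> 0"
  obtains a where "f a \<noteq> 0" "g (q - a) \<noteq> 0"
  using assms unfolding hmul_def by (metis (mono_tags, lifting) empty_Collect_eq sum.empty)

lemma support_hmul: "support (hmul f g) \<subseteq> support f + support g"
proof
  fix q assume "q \<in> support (hmul f g)"
  then obtain a where "f a \<noteq> 0" "g (q - a) \<noteq> 0" by (auto elim: hmul_nonzeroE)
  then have "a + (q - a) \<in> support f + support g" by (intro set_plus_intro) auto
  then show "q \<in> support f + support g" by simp
qed

lemma finite_hmul_terms:
  assumes "f \<in> hahn" "g \<in> hahn"
  shows "finite {a. f a \<noteq> 0 \<and> g (q - a) \<noteq> 0}"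
  using well_ordered_convolution_finite[of "support f" "support g" q] assms
  by (simp add: hahn_iff_well_ordered)

lemma hahn_subset: "f \<in> hahn \<Longrightarrow> support g \<subseteq> support f \<Longrightarrow> g \<in> hahn"
  unfolding hahn_iff_well_ordered by (rule well_ordered_subset)

lemma hahn_finite_support: "finite (support f) \<Longrightarrow> f \<in> hahn"
  unfolding hahn_iff_well_ordered by (rule well_ordered_finite)

lemma hahn_hmul: "f \<in> hahn \<Longrightarrow> g \<in> hahn \<Longrightarrow> hmul f g \<in> hahn"
  unfolding hahn_iff_well_ordered by (metis support_hmul well_ordered_plus well_ordered_subset)

lemma hahn_add: "f \<in> hahn \<Longrightarrow> g \<in> hahn \<Longrightarrow> (\<lambda>q. f q + g q :: 'a::monoid_add) \<in> hahn"
  unfolding hahn_iff_well_ordered by (erule well_ordered_subset[OF well_ordered_Un]) auto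

lemma hahn_uminus: "f \<in> hahn \<Longrightarrow> (\<lambda>q. - f q :: 'a::group_add) \<in> hahn"
  by (simp add: hahn_iff_well_ordered)

lemma hahn_hzero: "hzero \<in> hahn"
  by (rule hahn_finite_support) (simp add: hzero_def)

lemma hahn_hone: "hone \<in> hahn"
  by (rule hahn_finite_support) (simp add: hone_def)

lemma hahn_hmonom: "hmonom c e \<in> hahn"
  by (rule hahn_finite_support, rule finite_subset[of _ "{e}"]) (auto simp: hmonom_def)

lemma hmul_commute: "hmul f g = hmul g (f :: rat \<Rightarrow> 'a::comm_ring_1)"
proof
  fix q
  show "hmul f g q = hmul g f q"
    unfolding hmul_def
    by (rule sum.reindex_bij_witness[where i="\<lambda>a. q - a" and j="\<lambda>a. q - a"]) (auto simp: mult.commute)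
qed

lemma hmul_hmonom: "hmul (hmonom c e) f q = (c :: 'a::comm_ring_1) * f (q - e)"
proof -
  have "hmul (hmonom c e) f q = (\<Sum>a\<in>{e}. hmonom c e a * f (q - a))"
    by (rule hmul_eq_sum) (auto simp: hmonom_def)
  then show ?thesis by (simp add: hmonom_def)
qed

lemma hmul_hone: "hmul hone f = (f :: rat \<Rightarrow> 'a::comm_ring_1)"
  using hmul_hmonom[of 1 0 f] by (simp add: hone_def hmonom_def fun_eq_iff)

lemma hmul_add:
  assumes "f \<in> hahn" "g \<in> hahn" "h \<in> hahn"
  shows "hmul f (\<lambda>q. g q + h q) = (\<lambda>q. hmul f g q + hmul f (h :: rat \<Rightarrow> 'a::comm_ring_1) q)"
proof
  fix q
  let ?A = "{a. f a \<noteq> 0 \<and> g (q - a) \<noteq> 0} \<union> {a. f a \<noteq> 0 \<and> h (q - a) \<noteq> 0}"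
  have fin: "finite ?A" using finite_hmul_terms assms by blast
  have "hmul f (\<lambda>q. g q + h q) q = (\<Sum>a\<in>?A. f a * (g (q - a) + h (q - a)))"
    by (rule hmul_eq_sum[OF fin]) auto
  also have "\<dots> = (\<Sum>a\<in>?A. f a * g (q - a)) + (\<Sum>a\<in>?A. f a * h (q - a))"
    by (simp add: distrib_left sum.distrib)
  also have "\<dots> = hmul f g q + hmul f h q"
    by (subst (1 2) hmul_eq_sum[OF fin]) auto
  finally show "hmul f (\<lambda>q. g q + h q) q = hmul f g q + hmul f h q" .
qed

lemma hmul_hmul_eq_sum_pairs:
  fixes f g h :: "rat \<Rightarrow> 'a::comm_ring_1"
  assumes "f \<in> hahn" "g \<in> hahn" "h \<in> hahn"
  shows "hmul (hmul f g) h q =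
    (\<Sum>(a, b)\<in>{(a, b). f a \<noteq> 0 \<and> g b \<noteq> 0 \<and> h (q - a - b) \<noteq> 0}. f a * g b * h (q - a - b))"
proof -
  define A where "A = {c \<in> support f + support g. q - c \<in> support h}"
  define B where "B c = {a \<in> support f. c - a \<in> support g}" for c
  have wo: "well_ordered (support f)" "well_ordered (support g)" "well_ordered (support h)"
    using assms by (simp_all add: hahn_iff_well_ordered)
  have fin: "finite A" "finite (B c)" for c
    unfolding A_def B_def using wo well_ordered_plus well_ordered_convolution_finite by blast+
  have "hmul (hmul f g) h q = (\<Sum>c\<in>A. hmul f g c * h (q - c))"
    by (rule hmul_eq_sum[OF fin(1)]) (use support_hmul[of f g] in \<open>auto simp: A_def\<close>)
  also have "\<dots> = (\<Sum>c\<in>A. \<Sum>a\<in>B c. f a * g (c - a) * h (q - c))"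
  proof (rule sum.cong[OF refl])
    fix c
    have "hmul f g c = (\<Sum>a\<in>B c. f a * g (c - a))" by (rule hmul_eq_sum[OF fin(2)]) (auto simp: B_def)
    then show "hmul f g c * h (q - c) = (\<Sum>a\<in>B c. f a * g (c - a) * h (q - c))"
      by (simp add: sum_distrib_right)
  qed
  also have "\<dots> = (\<Sum>(c, a)\<in>Sigma A B. f a * g (c - a) * h (q - c))"
    by (rule sum.Sigma) (use fin in auto)
  also have "\<dots> = (\<Sum>(a, b)\<in>{(a, b). f a \<noteq> 0 \<and> g b \<noteq> 0 \<and> h (q - a - b) \<noteq> 0}. f a * g b * h (q - a - b))"
    by (rule sum.reindex_bij_witness[where i="\<lambda>(a, b). (a + b, a)" and j="\<lambda>(c, a). (a, c - a)"])
       (auto simp: A_def B_def diff_diff_eq intro: set_plus_intro)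
  finally show ?thesis .
qed

lemma hmul_assoc:
  fixes f g h :: "rat \<Rightarrow> 'a::comm_ring_1"
  assumes "f \<in> hahn" "g \<in> hahn" "h \<in> hahn"
  shows "hmul (hmul f g) h = hmul f (hmul g h)"
proof
  fix q
  have "hmul f (hmul g h) q = hmul (hmul h g) f q" by (simp add: hmul_commute)
  also have "\<dots> = (\<Sum>(c, b)\<in>{(c, b). h c \<noteq> 0 \<and> g b \<noteq> 0 \<and> f (q - c - b) \<noteq> 0}. h c * g b * f (q - c - b))"
    by (rule hmul_hmul_eq_sum_pairs[OF assms(3,2,1)])
  also have "\<dots> = hmul (hmul f g) h q"
    unfolding hmul_hmul_eq_sum_pairs[OF assms]
    by (rule sum.reindex_bij_witness[where i="\<lambda>(a, b). (q - a - b, b)" and j="\<lambda>(c, b). (q - c - b, b)"])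
       (auto simp: diff_diff_eq mult.commute mult.left_commute)
  finally show "hmul (hmul f g) h q = hmul f (hmul g h) q" ..
qed

lemma hmul_neq_hzero:
  fixes f g :: "rat \<Rightarrow> 'a::idom"
  assumes "f \<in> hahn" "g \<in> hahn" "f \<noteq> hzero" "g \<noteq> hzero"
  shows "hmul f g \<noteq> hzero"
proof -
  obtain a b where "f a \<noteq> 0" "g b \<noteq> 0" using assms(3,4) by (auto simp: hzero_def fun_eq_iff)
  have wo: "well_ordered (support f)" "well_ordered (support g)"
    using assms(1,2) by (simp_all add: hahn_iff_well_ordered)
  obtain m1 where m1: "m1 \<in> support f" "\<And>x. x \<in> support f \<Longrightarrow> m1 \<le> x"
    by (rule well_ordered_least[OF wo(1), of a]) (use \<open>f a \<noteq> 0\<close> in auto)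
  obtain m2 where m2: "m2 \<in> support g" "\<And>x. x \<in> support g \<Longrightarrow> m2 \<le> x"
    by (rule well_ordered_least[OF wo(2), of b]) (use \<open>g b \<noteq> 0\<close> in auto)
  have "hmul f g (m1 + m2) = (\<Sum>a\<in>{m1}. f a * g (m1 + m2 - a))"
  proof (rule hmul_eq_sum)
    show "{a. f a \<noteq> 0 \<and> g (m1 + m2 - a) \<noteq> 0} \<subseteq> {m1}"
    proof
      fix a assume "a \<in> {a. f a \<noteq> 0 \<and> g (m1 + m2 - a) \<noteq> 0}"
      then have "m1 \<le> a" "m2 \<le> m1 + m2 - a" using m1(2) m2(2) by auto
      then show "a \<in> {m1}" by simp
    qed
  qed simp
  also have "\<dots> \<noteq> 0" using m1(1) m2(1) by simp
  finally show ?thesis by (auto simp: hzero_def fun_eq_iff)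
qed

typedef (overloaded) ('a::zero) hahn_series = "hahn :: (rat \<Rightarrow> 'a) set"
  morphisms hcoeff Abs_hahn_series
  using hahn_hzero by blast

setup_lifting type_definition_hahn_series

instantiation hahn_series :: (comm_ring_1) comm_ring_1
begin

lift_definition zero_hahn_series :: "'a hahn_series" is hzero by (rule hahn_hzero)
lift_definition one_hahn_series :: "'a hahn_series" is hone by (rule hahn_hone)
lift_definition plus_hahn_series :: "'a hahn_series \<Rightarrow> 'a hahn_series \<Rightarrow> 'a hahn_series"
  is "\<lambda>f g q. f q + g q" by (rule hahn_add)
lift_definition uminus_hahn_series :: "'a hahn_series \<Rightarrow> 'a hahn_series"
  is "\<lambda>f q. - f q" by (rule hahn_uminus)
lift_definition minus_hahn_series :: "'a hahn_series \<Rightarrow> 'a hahn_series \<Rightarrow> 'a hahn_series"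
  is "\<lambda>f g q. f q - g q" using hahn_add[OF _ hahn_uminus] by (simp only: diff_conv_add_uminus)
lift_definition times_hahn_series :: "'a hahn_series \<Rightarrow> 'a hahn_series \<Rightarrow> 'a hahn_series"
  is hmul by (rule hahn_hmul)

instance
proof
  fix a b c :: "'a hahn_series"
  show "a * b * c = a * (b * c)" by transfer (rule hmul_assoc)
  show "a * b = b * a" by transfer (rule hmul_commute)
  show "1 * a = a" by transfer (rule hmul_hone)
  show "(a + b) * c = a * c + b * c"
  proof transfer
    fix f g h :: "rat \<Rightarrow> 'a" assume "f \<in> hahn" "g \<in> hahn" "h \<in> hahn"
    then show "hmul (\<lambda>q. f q + g q) h = (\<lambda>q. hmul f h q + hmul g h q)"
      using hmul_add[of h f g] by (simp add: hmul_commute)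
  qed
  show "a + b + c = a + (b + c)" by transfer (simp add: add.assoc)
  show "a + b = b + a" by transfer (simp add: add.commute)
  show "0 + a = a" by transfer (simp add: hzero_def)
  show "- a + a = 0" by transfer (simp add: hzero_def)
  show "a - b = a + - b" by transfer simp
  show "(0::'a hahn_series) \<noteq> 1" by transfer (simp add: hzero_def hone_def fun_eq_iff)
qed

end

instance hahn_series :: (idom) idom
  by standard (transfer, rule hmul_neq_hzero)

lemma hahn_series_eqI: "(\<And>q. hcoeff x q = hcoeff y q) \<Longrightarrow> x = y"
  by (metis hcoeff_inject ext)

lemma hcoeff_0 [simp]: "hcoeff 0 q = 0"
  by transfer (simp add: hzero_def)

lemma hcoeff_1: "hcoeff 1 q = (if q = 0 then 1 else 0)"
  by transfer (simp add: hone_def)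

lemma hcoeff_add [simp]: "hcoeff (x + y) q = hcoeff x q + hcoeff y q"
  by transfer simp

lemma hcoeff_mult: "hcoeff (x * y) = hmul (hcoeff x) (hcoeff y)"
  by transfer simp

lemma hcoeff_sum: "hcoeff (\<Sum>i\<in>A. F i) q = (\<Sum>i\<in>A. hcoeff (F i) q)"
  by (induction A rule: infinite_finite_induct) auto

lemma hcoeff_of_nat: "hcoeff (of_nat n :: 'a::comm_ring_1 hahn_series) q = (if q = 0 then of_nat n else 0)"
  by (induction n) (auto simp: hcoeff_1)

lemma CHAR_hahn_series: "CHAR('a::comm_ring_1 hahn_series) = CHAR('a)"
proof (rule CHAR_eqI)
  show "of_nat CHAR('a) = (0 :: 'a hahn_series)"
    by (rule hahn_series_eqI) (simp add: hcoeff_of_nat)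
next
  fix n assume "of_nat n = (0 :: 'a hahn_series)"
  then have "hcoeff (of_nat n :: 'a hahn_series) 0 = 0" by simp
  then show "CHAR('a) dvd n" by (simp add: hcoeff_of_nat of_nat_eq_0_iff_char_dvd)
qed

lift_definition hmonomial :: "'a::comm_ring_1 \<Rightarrow> rat \<Rightarrow> 'a hahn_series" is hmonom
  by (rule hahn_hmonom)

lemma hcoeff_hmonomial: "hcoeff (hmonomial c e) q = (if q = e then c else 0)"
  by transfer (simp add: hmonom_def)

lemma hcoeff_hmonomial_mult: "hcoeff (hmonomial c e * x) q = c * hcoeff x (q - e)"
  by (simp add: hcoeff_mult hmonomial.rep_eq hmul_hmonom)

lemma hmonomial_mult: "hmonomial a e * hmonomial b e' = hmonomial (a * b) (e + e')"
  by (rule hahn_series_eqI) (simp add: hcoeff_hmonomial_mult hcoeff_hmonomial)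

lemma hmonomial_1_0: "hmonomial 1 0 = 1"
  by (rule hahn_series_eqI) (simp add: hcoeff_hmonomial hcoeff_1)

lemma hmonomial_power: "hmonomial c e ^ n = hmonomial (c ^ n) (of_nat n * e)"
  by (induction n) (simp_all add: hmonomial_1_0 hmonomial_mult algebra_simps)

lemma hmonomial_eq_0_iff: "hmonomial c e = 0 \<longleftrightarrow> c = 0"
  by (metis hcoeff_0 hcoeff_hmonomial hahn_series_eqI)

lemma hmonomial_1_eq_iff: "hmonomial (1 :: 'a::comm_ring_1) e = hmonomial 1 e' \<longleftrightarrow> e = e'"
  by (metis hcoeff_hmonomial zero_neq_one)

lemma one_plus_hmonomial_neq_0: "e \<noteq> 0 \<Longrightarrow> 1 + hmonomial 1 e \<noteq> (0 :: 'a::comm_ring_1 hahn_series)"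
  by (metis add.right_neutral hcoeff_0 hcoeff_1 hcoeff_add hcoeff_hmonomial zero_neq_one)

lemma of_nat_hahn_series: "of_nat n = hmonomial (of_nat n) 0"
  by (rule hahn_series_eqI) (simp add: hcoeff_of_nat hcoeff_hmonomial)

lift_definition hrestrict :: "rat set \<Rightarrow> 'a::comm_ring_1 hahn_series \<Rightarrow> 'a hahn_series"
  is "\<lambda>A f q. if q \<in> A then f q else 0"
  by (erule hahn_subset) auto

lemma hcoeff_hrestrict: "hcoeff (hrestrict A x) q = (if q \<in> A then hcoeff x q else 0)"
  by transfer simp

lemma hrestrict_sum: "hrestrict A (\<Sum>i\<in>I. F i) = (\<Sum>i\<in>I. hrestrict A (F i))"
  by (rule hahn_series_eqI) (simp add: hcoeff_hrestrict hcoeff_sum)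

lemma hcoeff_power_less:
  assumes "\<And>a. hcoeff y a \<noteq> 0 \<Longrightarrow> a < r" "hcoeff (y ^ Suc n) a \<noteq> 0"
  shows "a < of_nat (Suc n) * r"
  using assms(2)
proof (induction n arbitrary: a)
  case (Suc n)
  then obtain b where "hcoeff y b \<noteq> 0" "hcoeff (y ^ Suc n) (a - b) \<noteq> 0"
    by (auto simp: hcoeff_mult elim: hmul_nonzeroE)
  then have "b < r" "a - b < of_nat (Suc n) * r" using assms(1) Suc.IH by auto
  then show ?case by (simp add: algebra_simps)
qed (use assms(1) in simp)

lemma hcoeff_power_greater:
  assumes "\<And>a. hcoeff y a \<noteq> 0 \<Longrightarrow> r < a" "hcoeff (y ^ Suc n) a \<noteq> 0"
  shows "of_nat (Suc n) * r < a"
  using assms(2)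
proof (induction n arbitrary: a)
  case (Suc n)
  then obtain b where "hcoeff y b \<noteq> 0" "hcoeff (y ^ Suc n) (a - b) \<noteq> 0"
    by (auto simp: hcoeff_mult elim: hmul_nonzeroE)
  then have "r < b" "of_nat (Suc n) * r < a - b" using assms(1) Suc.IH by auto
  then show ?case by (simp add: algebra_simps)
qed (use assms(1) in simp)

text \<open>Split \<open>x\<close> at the exponent \<open>q / m\<close>: by the freshman's dream only the middle monomial
  contributes to the coefficient at \<open>q\<close>.\<close>

lemma hcoeff_power_char_pow:
  fixes x :: "'a::comm_ring_1 hahn_series"
  assumes "prime CHAR('a)" "m = CHAR('a) ^ k"
  shows "hcoeff (x ^ m) q = hcoeff x (q / of_nat m) ^ m"
proof -
  have "m > 0" using assms by (simp add: prime_gt_0_nat)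
  then obtain n where n: "m = Suc n" using gr0_implies_Suc by blast
  define r where "r = q / of_nat m"
  have q: "q = of_nat m * r" using \<open>m > 0\<close> by (simp add: r_def)
  define below where "below = hrestrict {a. a < r} x"
  define above where "above = hrestrict {a. r < a} x"
  have "x = below + hmonomial (hcoeff x r) r + above"
    by (rule hahn_series_eqI) (auto simp: below_def above_def hcoeff_hrestrict hcoeff_hmonomial)
  moreover have "prime CHAR('a hahn_series)" "m = CHAR('a hahn_series) ^ k"
    using assms by (simp_all add: CHAR_hahn_series)
  ultimately have "x ^ m = below ^ m + hmonomial (hcoeff x r) r ^ m + above ^ m"
    by (metis freshmans_dream')
  moreover have "hcoeff (below ^ m) q = 0"
  proof (rule ccontr)
    assume "hcoeff (below ^ m) q \<noteq> 0"
    moreover have "\<And>a. hcoeff below a \<noteq> 0 \<Longrightarrow> a < r"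
      by (simp add: below_def hcoeff_hrestrict split: if_splits)
    ultimately have "q < of_nat m * r" unfolding n by (rule hcoeff_power_less[rotated])
    then show False using q by simp
  qed
  moreover have "hcoeff (above ^ m) q = 0"
  proof (rule ccontr)
    assume "hcoeff (above ^ m) q \<noteq> 0"
    moreover have "\<And>a. hcoeff above a \<noteq> 0 \<Longrightarrow> r < a"
      by (simp add: above_def hcoeff_hrestrict split: if_splits)
    ultimately have "of_nat m * r < q" unfolding n by (rule hcoeff_power_greater[rotated])
    then show False using q by simp
  qed
  ultimately have "hcoeff (x ^ m) q = hcoeff (hmonomial (hcoeff x r ^ m) (of_nat m * r)) q"
    by (simp add: hmonomial_power)
  also have "\<dots> = hcoeff x r ^ m" by (simp add: hcoeff_hmonomial q)
  finally show ?thesis by (simp add: r_def)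
qed

lemma of_nat_power_char_pow:
  assumes "prime CHAR('a::comm_ring_1)" "m = CHAR('a) ^ k"
  shows "(of_nat n :: 'a) ^ m = of_nat n"
  using freshmans_dream_sum'[OF assms, of "\<lambda>_. 1" "{..<n}"] by simp

section \<open>The series \<open>s\<close> and its Frobenius powers\<close>

lemma hsum_eq_single:
  assumes "\<And>j. j \<noteq> i \<Longrightarrow> F j q = 0"
  shows "hsum F q = F i q"
proof -
  have "hsum F q = (\<Sum>j\<in>{i}. F j q)"
    unfolding hsum_def by (rule sum.mono_neutral_left) (use assms in auto)
  then show ?thesis by simp
qed

definition s_exp :: "nat \<Rightarrow> nat \<Rightarrow> nat \<Rightarrow> rat" where
  "s_exp p n j = of_nat n - 1 / of_nat p ^ (j + 1)"

lemma s_exp_eq_iff: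
  assumes "p \<ge> 2"
  shows "s_exp p n j = s_exp p n' j' \<longleftrightarrow> n = n' \<and> j = j'"
proof
  assume eq: "s_exp p n j = s_exp p n' j'"
  have bounds: "0 < 1 / (of_nat p ^ (i + 1) :: rat)" "1 / (of_nat p ^ (i + 1) :: rat) < 1" for i
  proof -
    have gt: "(1::rat) < of_nat p ^ (i + 1)" using assms by (intro one_less_power) auto
    then have "(0::rat) < of_nat p ^ (i + 1)" by linarith
    with gt show "0 < 1 / (of_nat p ^ (i + 1) :: rat)" "1 / (of_nat p ^ (i + 1) :: rat) < 1"
      by (simp_all only: zero_less_divide_1_iff divide_less_eq_1_pos)
  qed
  have "n = n'"
  proof (rule ccontr)
    assume "n \<noteq> n'"
    then have "(of_nat n :: rat) + 1 \<le> of_nat n' \<or> (of_nat n' :: rat) + 1 \<le> of_nat n"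
      by (metis linorder_neqE_nat Suc_leI of_nat_Suc of_nat_le_iff add.commute)
    then show False using eq bounds[of j] bounds[of j'] unfolding s_exp_def by linarith
  qed
  with eq have "(of_nat (p ^ (j + 1)) :: rat) = of_nat (p ^ (j' + 1))" by (simp add: s_exp_def)
  then have "p ^ (j + 1) = p ^ (j' + 1)" by (simp only: of_nat_eq_iff)
  with assms \<open>n = n'\<close> show "n = n' \<and> j = j'" by (simp add: power_inject_exp)
qed simp

lemma s_exp_shift: "s_exp p n j = of_nat n + s_exp p 0 j"
  by (simp add: s_exp_def)

lemma s_exp_0: "s_exp p 0 j = - 1 / of_nat p ^ (j + 1)"
  by (simp add: s_exp_def)

lemma s_n_eq_0: "(\<And>j. r \<noteq> s_exp p 0 j) \<Longrightarrow> s_n p n r = 0"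
  by (simp add: s_n_def hsum_def hmonom_def hzero_def s_exp_0)

lemma s_n_s_exp_0:
  assumes "p \<ge> 2"
  shows "(s_n p n (s_exp p 0 j) :: 'a::comm_ring_1) = of_nat (j choose n)"
  unfolding s_n_def s_exp_0[symmetric]
  by (subst hsum_eq_single[of j]) (auto simp: hmonom_def hzero_def binomial_eq_0 s_exp_eq_iff[OF assms])

lemma s_ser_eq_0:
  assumes "\<And>n j. q \<noteq> s_exp p n j"
  shows "(s_ser p q :: 'a::comm_ring_1) = 0"
proof -
  have "(s_n p n (q - of_nat n) :: 'a) = 0" for n
  proof (rule s_n_eq_0)
    fix j
    show "q - of_nat n \<noteq> s_exp p 0 j"
      using assms[of n j] s_exp_shift[of p n j] by linarith
  qed
  then show ?thesis by (simp add: s_ser_def hsum_def hmul_hmonom)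
qed

lemma s_ser_s_exp:
  assumes "p \<ge> 2"
  shows "(s_ser p (s_exp p n j) :: 'a::comm_ring_1) = of_nat (j choose n)"
proof -
  have "(s_n p n' (s_exp p n j - of_nat n') :: 'a) = 0" if "n' \<noteq> n" for n'
  proof (rule s_n_eq_0)
    fix j'
    show "s_exp p n j - of_nat n' \<noteq> s_exp p 0 j'"
      using s_exp_eq_iff[OF assms, of n j n' j'] s_exp_shift[of p n' j'] that by linarith
  qed
  moreover have "s_exp p n j - of_nat n = s_exp p 0 j" using s_exp_shift[of p n j] by linarith
  ultimately show ?thesis
    unfolding s_ser_def by (subst hsum_eq_single[of n]) (auto simp: hmul_hmonom s_n_s_exp_0[OF assms])
qed

lemma s_ser_hahn: "s_ser p \<in> hahn"
proof -
  have "mono (\<lambda>j. - 1 / of_nat p ^ (j + 1) :: rat)"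
  proof (cases "p = 0")
    case False
    show ?thesis
    proof (rule monoI)
      fix j j' :: nat assume "j \<le> j'"
      then have "(of_nat p ^ (j + 1) :: rat) \<le> of_nat p ^ (j' + 1)"
        using False by (intro power_increasing) auto
      moreover have "(0 :: rat) < of_nat p ^ (j + 1)" using False by simp
      ultimately have "1 / (of_nat p ^ (j' + 1) :: rat) \<le> 1 / of_nat p ^ (j + 1)"
        by (intro frac_le) auto
      then show "- 1 / (of_nat p ^ (j + 1) :: rat) \<le> - 1 / of_nat p ^ (j' + 1)" by simp
    qed
  qed simp
  moreover have "mono (of_nat :: nat \<Rightarrow> rat)" by (rule monoI) simp
  ultimately have "well_ordered (range of_nat + range (\<lambda>j. - 1 / of_nat p ^ (j + 1) :: rat))"
    by (intro well_ordered_plus well_ordered_range_mono)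
  moreover have "support (s_ser p :: rat \<Rightarrow> 'a) \<subseteq> range of_nat + range (\<lambda>j. - 1 / of_nat p ^ (j + 1))"
  proof
    fix q assume "q \<in> support (s_ser p :: rat \<Rightarrow> 'a)"
    then obtain n j where "q = s_exp p n j" using s_ser_eq_0 by blast
    then have q: "q = of_nat n + - 1 / of_nat p ^ (j + 1)" by (simp add: s_exp_def)
    show "q \<in> range of_nat + range (\<lambda>j. - 1 / of_nat p ^ (j + 1))"
      unfolding q by (intro set_plus_intro) auto
  qed
  ultimately show ?thesis
    unfolding hahn_iff_well_ordered by (rule well_ordered_subset)
qed

lift_definition s_hahn :: "nat \<Rightarrow> 'a::comm_ring_1 hahn_series" is s_ser
  by (rule s_ser_hahn)

lemma hcoeff_s_hahn_power:
  assumes "prime p" "CHAR('a::comm_ring_1) = p"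
  shows "hcoeff (s_hahn p ^ p ^ k :: 'a hahn_series) q = s_ser p (q / of_nat p ^ k)"
proof -
  have "hcoeff (s_hahn p ^ p ^ k :: 'a hahn_series) q = s_ser p (q / of_nat p ^ k) ^ p ^ k"
    using hcoeff_power_char_pow[of "p ^ k" k "s_hahn p :: 'a hahn_series" q] assms
    by (simp add: s_hahn.rep_eq)
  also have "\<dots> = s_ser p (q / of_nat p ^ k)"
  proof (cases "\<exists>n j. q / of_nat p ^ k = s_exp p n j")
    case True
    then obtain n j where nj: "q / of_nat p ^ k = s_exp p n j" by blast
    show ?thesis
      unfolding nj s_ser_s_exp[OF prime_ge_2_nat[OF assms(1)]]
      by (rule of_nat_power_char_pow) (simp_all add: assms)
  next
    case False
    then have "s_ser p (q / of_nat p ^ k) = (0::'a)" using s_ser_eq_0 by blast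
    moreover have "0 < p ^ k" using assms(1) by (simp add: prime_gt_0_nat)
    ultimately show ?thesis by (metis zero_power)
  qed
  finally show ?thesis .
qed

section \<open>Puiseux series\<close>

definition frac_ints :: "nat \<Rightarrow> rat set" where
  "frac_ints N = {of_int k / of_nat N | k. True}"

lemma frac_ints_add: "x \<in> frac_ints N \<Longrightarrow> y \<in> frac_ints N \<Longrightarrow> x + y \<in> frac_ints N"
  unfolding frac_ints_def by (auto simp: add_divide_distrib[symmetric] intro: exI[of _ "_ + _"])

lemma frac_ints_diff: "x \<in> frac_ints N \<Longrightarrow> y \<in> frac_ints N \<Longrightarrow> x - y \<in> frac_ints N"
  unfolding frac_ints_def by (auto simp: diff_divide_distrib[symmetric] intro: exI[of _ "_ - _"])

lemma frac_ints_subset_mult: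
  assumes "M > 0"
  shows "frac_ints N \<subseteq> frac_ints (N * M)" "frac_ints N \<subseteq> frac_ints (M * N)"
proof -
  have "x \<in> frac_ints (N * M)" if x: "x \<in> frac_ints N" for x
  proof -
    obtain k where "x = of_int k / of_nat N" using x by (auto simp: frac_ints_def)
    then have "x = of_int (k * int M) / of_nat (N * M)" using assms by simp
    then show ?thesis unfolding frac_ints_def by blast
  qed
  then show "frac_ints N \<subseteq> frac_ints (N * M)" "frac_ints N \<subseteq> frac_ints (M * N)"
    by (auto simp: mult.commute)
qed

lemma of_int_in_frac_ints: "N > 0 \<Longrightarrow> of_int z \<in> frac_ints N"
  unfolding frac_ints_def by (auto intro!: exI[of _ "z * int N"])

lemma well_ordered_frac_ints_above:
  assumes "N > 0"
  shows "well_ordered {q \<in> frac_ints N. of_int m \<le> q}"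
proof (rule well_ordered_subset)
  show "well_ordered (range (\<lambda>n::nat. (of_int (m * int N) + of_nat n) / of_nat N :: rat))"
    by (rule well_ordered_range_mono, rule monoI, rule divide_right_mono) auto
  show "{q \<in> frac_ints N. of_int m \<le> q} \<subseteq> range (\<lambda>n. (of_int (m * int N) + of_nat n) / of_nat N)"
  proof
    fix q assume "q \<in> {q \<in> frac_ints N. of_int m \<le> q}"
    then obtain k where q: "q = of_int k / of_nat N" "of_int m \<le> q" by (auto simp: frac_ints_def)
    then have "(of_int (m * int N) :: rat) \<le> of_int k" using assms by (simp add: le_divide_eq)
    then have "m * int N \<le> k" by (simp only: of_int_le_iff)
    then have "q = (of_int (m * int N) + of_nat (nat (k - m * int N))) / of_nat N" using q(1) by simp
    then show "q \<in> range (\<lambda>n. (of_int (m * int N) + of_nat n) / of_nat N)" by blast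
  qed
qed

lemma puiseux_iff:
  "f \<in> puiseux \<longleftrightarrow> (\<exists>N>0. support f \<subseteq> frac_ints N \<and> (\<exists>m::int. \<forall>q\<in>support f. of_int m \<le> q))"
  unfolding puiseux_def frac_ints_def by blast

lemma puiseux_hahn:
  assumes "f \<in> puiseux"
  shows "f \<in> hahn"
proof -
  obtain N m where "N > 0" "support f \<subseteq> frac_ints N" "\<forall>q\<in>support f. of_int m \<le> q"
    using assms unfolding puiseux_iff by blast
  then have "support f \<subseteq> {q \<in> frac_ints N. of_int m \<le> q}" by blast
  with well_ordered_frac_ints_above[OF \<open>N > 0\<close>] show ?thesis
    unfolding hahn_iff_well_ordered by (rule well_ordered_subset)
qed

lemma puiseux_common_denominator:
  assumes "finite A" "\<And>k. k \<in> A \<Longrightarrow> F k \<in> puiseux"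
  shows "\<exists>N>0. \<forall>k\<in>A. support (F k) \<subseteq> frac_ints N"
  using assms
proof (induction A rule: finite_induct)
  case empty
  show ?case by (rule exI[of _ 1]) simp
next
  case (insert a A)
  have "\<exists>N>0. \<forall>k\<in>A. support (F k) \<subseteq> frac_ints N" by (rule insert.IH) (simp add: insert.prems)
  then obtain N where N: "N > 0" "\<forall>k\<in>A. support (F k) \<subseteq> frac_ints N" by blast
  have "F a \<in> puiseux" by (rule insert.prems) simp
  then obtain M where M: "M > 0" "support (F a) \<subseteq> frac_ints M" unfolding puiseux_iff by blast
  have "\<forall>k\<in>insert a A. support (F k) \<subseteq> frac_ints (N * M)"
    using N(2) M(2) frac_ints_subset_mult[OF M(1), of N] frac_ints_subset_mult[OF N(1), of M] by auto
  with N(1) M(1) show ?case by (intro exI[of _ "N * M"]) simp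
qed

lemma puiseux_add:
  assumes "f \<in> puiseux" "g \<in> puiseux"
  shows "(\<lambda>q. f q + g q :: 'a::monoid_add) \<in> puiseux"
proof -
  obtain N1 m1 where f: "N1 > 0" "support f \<subseteq> frac_ints N1" "\<forall>q\<in>support f. of_int m1 \<le> q"
    using assms(1) unfolding puiseux_iff by blast
  obtain N2 m2 where g: "N2 > 0" "support g \<subseteq> frac_ints N2" "\<forall>q\<in>support g. of_int m2 \<le> q"
    using assms(2) unfolding puiseux_iff by blast
  have "support (\<lambda>q. f q + g q) \<subseteq> support f \<union> support g" by auto
  also have "\<dots> \<subseteq> frac_ints (N1 * N2)"
    using f(2) g(2) frac_ints_subset_mult[OF g(1), of N1] frac_ints_subset_mult[OF f(1), of N2] by blast
  finally have "support (\<lambda>q. f q + g q) \<subseteq> frac_ints (N1 * N2)" .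
  moreover have "of_int (min m1 m2) \<le> q" if "q \<in> support (\<lambda>q. f q + g q)" for q
  proof -
    from that have "f q \<noteq> 0 \<or> g q \<noteq> 0" by auto
    then have "of_int m1 \<le> q \<or> of_int m2 \<le> q" using f(3) g(3) by auto
    then show ?thesis by (simp add: of_int_min min_le_iff_disj)
  qed
  ultimately show ?thesis using f(1) g(1) unfolding puiseux_iff by (meson nat_0_less_mult_iff)
qed

lemma puiseux_uminus: "f \<in> puiseux \<Longrightarrow> (\<lambda>q. - f q :: 'a::group_add) \<in> puiseux"
  unfolding puiseux_iff by simp

lemma puiseux_hmul:
  assumes "f \<in> puiseux" "g \<in> puiseux"
  shows "hmul f g \<in> puiseux"
proof -
  obtain N1 m1 where f: "N1 > 0" "support f \<subseteq> frac_ints N1" "\<forall>q\<in>support f. of_int m1 \<le> q"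
    using assms(1) unfolding puiseux_iff by blast
  obtain N2 m2 where g: "N2 > 0" "support g \<subseteq> frac_ints N2" "\<forall>q\<in>support g. of_int m2 \<le> q"
    using assms(2) unfolding puiseux_iff by blast
  have "q \<in> frac_ints (N1 * N2) \<and> of_int (m1 + m2) \<le> q" if "hmul f g q \<noteq> 0" for q
  proof -
    obtain a where a: "f a \<noteq> 0" "g (q - a) \<noteq> 0" using \<open>hmul f g q \<noteq> 0\<close> by (rule hmul_nonzeroE)
    have "a \<in> frac_ints (N1 * N2)" "q - a \<in> frac_ints (N1 * N2)"
      using a f(2) g(2) frac_ints_subset_mult[OF g(1), of N1] frac_ints_subset_mult[OF f(1), of N2] by auto
    then have "a + (q - a) \<in> frac_ints (N1 * N2)" by (rule frac_ints_add)
    moreover have "of_int m1 + of_int m2 \<le> a + (q - a)" using a f(3) g(3) by (intro add_mono) auto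
    ultimately show ?thesis by simp
  qed
  then have "support (hmul f g) \<subseteq> frac_ints (N1 * N2)" "\<forall>q\<in>support (hmul f g). of_int (m1 + m2) \<le> q"
    by auto
  moreover have "N1 * N2 > 0" using f(1) g(1) by simp
  ultimately show ?thesis unfolding puiseux_iff by blast
qed

lemma puiseux_hzero: "hzero \<in> puiseux"
  unfolding puiseux_iff hzero_def by (intro exI[of _ "1::nat"]) auto

lemma puiseux_hone: "hone \<in> puiseux"
proof -
  have "support (hone :: rat \<Rightarrow> 'a) \<subseteq> frac_ints 1" "\<forall>q\<in>support (hone :: rat \<Rightarrow> 'a). of_int 0 \<le> q"
    using of_int_in_frac_ints[of 1 0] by (auto simp: hone_def)
  then show ?thesis unfolding puiseux_iff by (intro exI[of _ "1::nat"] conjI exI[of _ "0::int"]) auto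
qed

lemma hrestrict_coset_mult:
  fixes b :: "'a::comm_ring_1 hahn_series"
  assumes "support (hcoeff b) \<subseteq> frac_ints N"
  shows "hrestrict {q. q + c \<in> frac_ints N} (b * x) = b * hrestrict {q. q + c \<in> frac_ints N} x"
proof (rule hahn_series_eqI)
  fix q
  define A where "A = {a. hcoeff b a \<noteq> 0 \<and> hcoeff x (q - a) \<noteq> 0}"
  have fin: "finite A" unfolding A_def using finite_hmul_terms hcoeff by blast
  have shift: "q - a + c \<in> frac_ints N \<longleftrightarrow> q + c \<in> frac_ints N" if "a \<in> A" for a
    using that assms frac_ints_add[of "q - a + c" N a] frac_ints_diff[of "q + c" N a]
    by (auto simp: A_def algebra_simps)
  have "hcoeff (b * hrestrict {q. q + c \<in> frac_ints N} x) q =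
      (\<Sum>a\<in>A. hcoeff b a * hcoeff (hrestrict {q. q + c \<in> frac_ints N} x) (q - a))"
    unfolding hcoeff_mult by (rule hmul_eq_sum[OF fin]) (auto simp: A_def hcoeff_hrestrict)
  also have "\<dots> = (\<Sum>a\<in>A. hcoeff b a * (if q - a + c \<in> frac_ints N then hcoeff x (q - a) else 0))"
    by (simp add: hcoeff_hrestrict)
  also have "\<dots> = (if q + c \<in> frac_ints N then \<Sum>a\<in>A. hcoeff b a * hcoeff x (q - a) else 0)"
    using shift by (auto intro: sum.neutral)
  also have "\<dots> = hcoeff (hrestrict {q. q + c \<in> frac_ints N} (b * x)) q"
    unfolding hcoeff_hrestrict hcoeff_mult by (subst hmul_eq_sum[OF fin]) (auto simp: A_def)
  finally show "hcoeff (hrestrict {q. q + c \<in> frac_ints N} (b * x)) q =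
      hcoeff (b * hrestrict {q. q + c \<in> frac_ints N} x) q" ..
qed

section \<open>Linear independence of the Frobenius powers of \<open>s\<close>\<close>

lemma coprime_power_power_minus_1:
  fixes P :: int
  assumes "w > 0"
  shows "coprime (P ^ M) (P ^ w - 1)"
proof -
  have "coprime (P ^ w - 1) (P ^ w)" by (rule coprime_diff_one_left)
  then have "coprime (P ^ w) (P ^ w - 1)" by (rule coprime_commute[THEN iffD1])
  then have "coprime P (P ^ w - 1)" using assms by (metis coprime_power_left_iff neq0_conv)
  then show ?thesis by (simp add: coprime_power_left_iff)
qed

lemma power_dvd_of_eq_diff_powers:
  fixes P N L :: int
  assumes "P \<noteq> 0" "A \<noteq> B" "L * P ^ (A + M) = N * (P ^ A - P ^ B)"
  shows "P ^ M dvd N"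
proof -
  obtain w where w: "w > 0" "P ^ M dvd N * (P ^ w - 1)"
  proof (cases "A < B")
    case True
    then obtain w where w: "B = A + w" "w > 0" by (metis less_imp_add_positive)
    have eq: "L * (P ^ A * P ^ M) = N * (P ^ A - P ^ A * P ^ w)"
      using assms(3) unfolding w(1) power_add .
    have "P ^ A * (L * P ^ M + N * (P ^ w - 1)) = L * (P ^ A * P ^ M) + N * (P ^ A * P ^ w - P ^ A)"
      by (simp add: algebra_simps)
    also have "\<dots> = 0" unfolding eq by (simp add: algebra_simps)
    finally have "L * P ^ M + N * (P ^ w - 1) = 0" using assms(1) by simp
    then have "P ^ M dvd L * P ^ M + N * (P ^ w - 1)" by simp
    then have "P ^ M dvd N * (P ^ w - 1)" using dvd_add_right_iff[OF dvd_triv_right[of "P ^ M" L]] by blast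
    with w(2) show thesis by (rule that)
  next
    case False
    then obtain w where w: "A = B + w" "w > 0" using assms(2) by (metis less_imp_add_positive nat_neq_iff)
    have eq: "L * (P ^ B * (P ^ w * P ^ M)) = N * (P ^ B * P ^ w - P ^ B)"
      using assms(3) unfolding w(1) power_add by (simp only: mult.assoc)
    have "P ^ B * (L * (P ^ w * P ^ M) - N * (P ^ w - 1)) = L * (P ^ B * (P ^ w * P ^ M)) - N * (P ^ B * P ^ w - P ^ B)"
      by (simp add: algebra_simps)
    also have "\<dots> = 0" unfolding eq by simp
    finally have "L * (P ^ w * P ^ M) = N * (P ^ w - 1)" using assms(1) by simp
    moreover have "P ^ M dvd L * (P ^ w * P ^ M)" by simp
    ultimately have "P ^ M dvd N * (P ^ w - 1)" by simp
    with w(2) show thesis by (rule that)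
  qed
  then show ?thesis using coprime_dvd_mult_left_iff[OF coprime_power_power_minus_1[OF w(1)]] by blast
qed

lemma s_exp_scaled_in_coset_iff:
  assumes "p \<ge> 2" "N > 0" "\<not> p ^ Suc m dvd N"
  shows "of_nat p ^ k * s_exp p n j + 1 / of_nat p ^ Suc m \<in> frac_ints N \<longleftrightarrow> j = m + k"
proof
  assume "of_nat p ^ k * s_exp p n j + 1 / of_nat p ^ Suc m \<in> frac_ints N"
  then obtain z where z: "of_nat p ^ k * s_exp p n j + 1 / of_nat p ^ Suc m = of_int z / of_nat N"
    by (auto simp: frac_ints_def)
  define P where "P = int p"
  have "of_int ((z - int N * P ^ k * int n) * P ^ (j + Suc m)) =
      (of_int (int N * (P ^ j - P ^ (m + k))) :: rat)"
    using z assms(1,2) by (simp add: P_def s_exp_def field_simps power_add)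
  then have "(z - int N * P ^ k * int n) * P ^ (j + Suc m) = int N * (P ^ j - P ^ (m + k))"
    by (simp only: of_int_eq_iff)
  moreover have "\<not> P ^ Suc m dvd int N"
    using assms(3) unfolding P_def of_nat_power[symmetric] int_dvd_int_iff .
  moreover have "P \<noteq> 0" using assms(1) by (simp add: P_def)
  ultimately show "j = m + k" using power_dvd_of_eq_diff_powers by blast
next
  assume "j = m + k"
  then have eq: "of_nat p ^ k * s_exp p n j + 1 / of_nat p ^ Suc m = of_int (int (p ^ k * n))"
    using assms(1) by (simp add: s_exp_def field_simps power_add)
  show "of_nat p ^ k * s_exp p n j + 1 / of_nat p ^ Suc m \<in> frac_ints N"
    unfolding eq by (rule of_int_in_frac_ints[OF assms(2)])
qed

lemma hmonomial_mult_binomial_power: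
  "hmonomial 1 c * (1 + hmonomial 1 e) ^ J =
    (\<Sum>n\<le>J. hmonomial (of_nat (J choose n) :: 'a::comm_ring_1) (of_nat n * e + c))"
proof -
  have "(1 + hmonomial 1 e) ^ J = (hmonomial 1 e + 1 :: 'a hahn_series) ^ J" by (simp add: add.commute)
  also have "\<dots> = (\<Sum>n\<le>J. of_nat (J choose n) * hmonomial 1 e ^ n * 1 ^ (J - n))" by (rule binomial_ring)
  also have "\<dots> = (\<Sum>n\<le>J. hmonomial (of_nat (J choose n)) (of_nat n * e))"
    by (simp add: hmonomial_power of_nat_hahn_series hmonomial_mult)
  finally show ?thesis by (simp add: sum_distrib_left hmonomial_mult add.commute)
qed

lemma hrestrict_coset_s_hahn_power:
  assumes "prime p" "CHAR('a::comm_ring_1) = p" "N > 0" "\<not> p ^ Suc m dvd N"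
  shows "hrestrict {q. q + 1 / of_nat p ^ Suc m \<in> frac_ints N} (s_hahn p ^ p ^ k :: 'a hahn_series) =
    hmonomial 1 (- 1 / of_nat p ^ Suc m) * (1 + hmonomial 1 (of_nat (p ^ k))) ^ (m + k)"
    (is "?L = ?R")
proof (rule hahn_series_eqI)
  fix q
  have p2: "p \<ge> 2" using assms(1) by (rule prime_ge_2_nat)
  define e where "e n j = of_nat p ^ k * s_exp p n j" for n j
  have e_eq_iff: "e n j = e n' j' \<longleftrightarrow> n = n' \<and> j = j'" for n j n' j'
    using s_exp_eq_iff[OF p2] p2 by (simp add: e_def)
  have "of_nat n * of_nat (p ^ k) + - 1 / of_nat p ^ Suc m = e n (m + k)" for n
    using p2 by (simp add: e_def s_exp_def field_simps power_add)
  then have R: "hcoeff ?R q = (\<Sum>n\<le>m + k. if q = e n (m + k) then of_nat (m + k choose n) else 0)"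
    by (simp add: hmonomial_mult_binomial_power hcoeff_sum hcoeff_hmonomial)
  have L: "hcoeff ?L q = (if q + 1 / of_nat p ^ Suc m \<in> frac_ints N then s_ser p (q / of_nat p ^ k) else 0)"
    by (simp add: hcoeff_hrestrict hcoeff_s_hahn_power[OF assms(1,2)])
  show "hcoeff ?L q = hcoeff ?R q"
  proof (cases "\<exists>n j. q = e n j")
    case True
    then obtain n j where q: "q = e n j" by blast
    have "q / of_nat p ^ k = s_exp p n j" using p2 by (simp add: q e_def)
    then have "hcoeff ?L q = (if j = m + k then of_nat (j choose n) else 0)"
      unfolding L using s_exp_scaled_in_coset_iff[OF p2 assms(3,4)]
      by (simp add: s_ser_s_exp[OF p2]) (simp add: q e_def)
    moreover have "hcoeff ?R q = (if j = m + k then of_nat (j choose n) else 0)"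
      unfolding R by (auto simp: q e_eq_iff binomial_eq_0 sum.delta)
    ultimately show ?thesis by simp
  next
    case False
    then have "s_ser p (q / of_nat p ^ k) = (0 :: 'a)"
      using p2 by (intro s_ser_eq_0) (auto simp: e_def field_simps)
    then show ?thesis unfolding L R using False by (auto intro: sum.neutral)
  qed
qed

lemma power_sums_eventually_zero_imp_zero:
  fixes y \<beta> :: "'i \<Rightarrow> 'b::idom"
  assumes "finite I" "inj_on y I" "\<And>k. k \<in> I \<Longrightarrow> y k \<noteq> 0"
    and "\<And>m. m \<ge> M \<Longrightarrow> (\<Sum>k\<in>I. \<beta> k * y k ^ m) = 0"
  shows "\<forall>k\<in>I. \<beta> k = 0"
  using assms
proof (induction I arbitrary: \<beta> rule: finite_induct)
  case (insert j I)
  have sum_insert: "\<beta> j * y j ^ m + (\<Sum>k\<in>I. \<beta> k * y k ^ m) = 0" if "m \<ge> M" for m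
    using insert.prems(3) that insert.hyps by simp
  text \<open>Eliminating \<open>y j\<close>: the weights \<open>\<beta> k * (y k - y j)\<close> satisfy the same hypothesis on \<open>I\<close>.\<close>
  have reduced: "(\<Sum>k\<in>I. \<beta> k * (y k - y j) * y k ^ m) = 0" if "m \<ge> M" for m
  proof -
    have "(\<Sum>k\<in>I. \<beta> k * (y k - y j) * y k ^ m) =
        (\<Sum>k\<in>I. \<beta> k * y k ^ Suc m) - y j * (\<Sum>k\<in>I. \<beta> k * y k ^ m)"
      by (simp add: sum_distrib_left sum_subtractf[symmetric] algebra_simps)
    also have "(\<Sum>k\<in>I. \<beta> k * y k ^ Suc m) = - (\<beta> j * y j ^ Suc m)"
      using sum_insert[of "Suc m"] that by (simp add: eq_neg_iff_add_eq_0 add.commute)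
    also have "(\<Sum>k\<in>I. \<beta> k * y k ^ m) = - (\<beta> j * y j ^ m)"
      using sum_insert[of m] that by (simp add: eq_neg_iff_add_eq_0 add.commute)
    finally show ?thesis by (simp add: algebra_simps)
  qed
  have "\<forall>k\<in>I. \<beta> k * (y k - y j) = 0"
  proof (rule insert.IH)
    show "inj_on y I" using insert.prems(1) by (simp add: inj_on_insert)
    show "y k \<noteq> 0" if "k \<in> I" for k using insert.prems(2) that by simp
    show "(\<Sum>k\<in>I. \<beta> k * (y k - y j) * y k ^ m) = 0" if "m \<ge> M" for m
      using reduced[OF that] .
  qed
  moreover have "\<forall>k\<in>I. y k \<noteq> y j" using insert.prems(1) insert.hyps(2) by (auto simp: inj_on_def)
  ultimately have I0: "\<forall>k\<in>I. \<beta> k = 0" by simp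
  then have "\<beta> j * y j ^ M = 0" using sum_insert[of M] by simp
  with I0 insert.prems(2) show ?case by simp
qed simp

lemma hrestrict_coset_frobenius_relation:
  fixes b :: "nat \<Rightarrow> 'a::idom hahn_series"
  assumes "prime p" "CHAR('a) = p" "N > 0" "\<not> p ^ Suc m dvd N"
    and "\<And>k. k \<le> D \<Longrightarrow> support (hcoeff (b k)) \<subseteq> frac_ints N"
    and "(\<Sum>k\<le>D. b k * s_hahn p ^ p ^ k) = 0"
  shows "(\<Sum>k\<le>D. b k * (1 + hmonomial 1 (of_nat (p ^ k))) ^ (m + k)) = 0"
proof -
  define S where "S = {q. q + 1 / of_nat p ^ Suc m \<in> frac_ints N}"
  have "0 = hrestrict S (\<Sum>k\<le>D. b k * s_hahn p ^ p ^ k)"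
    unfolding assms(6) by (rule hahn_series_eqI) (simp add: hcoeff_hrestrict)
  also have "\<dots> = (\<Sum>k\<le>D. b k * hrestrict S (s_hahn p ^ p ^ k))"
    unfolding S_def hrestrict_sum using assms(5) by (intro sum.cong refl hrestrict_coset_mult) auto
  also have "\<dots> = hmonomial 1 (- 1 / of_nat p ^ Suc m) *
      (\<Sum>k\<le>D. b k * (1 + hmonomial 1 (of_nat (p ^ k))) ^ (m + k))"
    unfolding S_def hrestrict_coset_s_hahn_power[OF assms(1-4)]
    by (simp add: sum_distrib_left algebra_simps)
  finally show ?thesis by (simp add: hmonomial_eq_0_iff)
qed

lemma s_hahn_frobenius_powers_independent:
  fixes b :: "nat \<Rightarrow> 'a::idom hahn_series"
  assumes "prime p" "CHAR('a) = p" "\<And>k. k \<le> D \<Longrightarrow> hcoeff (b k) \<in> puiseux"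
    and "(\<Sum>k\<le>D. b k * s_hahn p ^ p ^ k) = 0"
  shows "\<forall>k\<le>D. b k = 0"
proof -
  have p2: "p \<ge> 2" using assms(1) by (rule prime_ge_2_nat)
  obtain N where N: "N > 0" "\<And>k. k \<le> D \<Longrightarrow> support (hcoeff (b k)) \<subseteq> frac_ints N"
    using puiseux_common_denominator[of "{..D}" "\<lambda>k. hcoeff (b k)"] assms(3) by auto
  define y :: "nat \<Rightarrow> 'a hahn_series" where "y k = 1 + hmonomial 1 (of_nat (p ^ k))" for k
  have y_nonzero: "y k \<noteq> 0" for k
    using p2 by (simp add: y_def one_plus_hmonomial_neq_0)
  have "inj y"
    using p2 by (intro injI) (simp add: y_def hmonomial_1_eq_iff power_inject_exp)
  have relation: "(\<Sum>k\<le>D. (b k * y k ^ k) * y k ^ m) = 0" if "m \<ge> N" for m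
  proof -
    have "N < p ^ Suc m"
      using that p2 less_exp[of N] power_mono[of 2 p N] power_increasing[of N "Suc m" p] by linarith
    then have "\<not> p ^ Suc m dvd N" using N(1) by (simp add: nat_dvd_not_less)
    from hrestrict_coset_frobenius_relation[OF assms(1,2) N(1) this N(2) assms(4)]
    show ?thesis by (simp add: y_def power_add mult_ac)
  qed
  have "\<forall>k\<in>{..D}. b k * y k ^ k = 0"
  proof (rule power_sums_eventually_zero_imp_zero[where y = y and M = N])
    show "inj_on y {..D}" using \<open>inj y\<close> by (simp add: inj_on_def inj_def)
  qed (use y_nonzero relation in auto)
  then show ?thesis using y_nonzero by simp
qed

section \<open>Transcendence over the Puiseux field\<close>

lemma dependent_if_eliminated_dependent:
  fixes f :: "'i \<Rightarrow> 'b::idom poly"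
  assumes "finite I" "i0 \<in> I" "l \<noteq> 0"
    and "\<exists>i\<in>I - {i0}. b i \<noteq> 0"
    and "(\<Sum>i\<in>I - {i0}. smult (b i) (smult l (f i) - smult (c i) (f i0))) = 0"
  shows "\<exists>b. (\<exists>i\<in>I. b i \<noteq> 0) \<and> (\<Sum>i\<in>I. smult (b i) (f i)) = 0"
proof -
  define b' where "b' i = (if i = i0 then - (\<Sum>j\<in>I - {i0}. b j * c j) else b i * l)" for i
  have "\<exists>i\<in>I. b' i \<noteq> 0" using assms(3,4) by (auto simp: b'_def)
  moreover have "(\<Sum>i\<in>I - {i0}. smult (b' i) (f i)) = (\<Sum>i\<in>I - {i0}. smult (b i * l) (f i))"
    by (intro sum.cong) (auto simp: b'_def)
  then have "(\<Sum>i\<in>I. smult (b' i) (f i)) =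
      (\<Sum>i\<in>I - {i0}. smult (b i) (smult l (f i) - smult (c i) (f i0)))"
    by (simp add: sum.remove[OF assms(1,2)] b'_def smult_diff_right sum_subtractf smult_sum mult.commute)
  ultimately show ?thesis using assms(5) by metis
qed

lemma low_degree_polys_dependent:
  fixes f :: "'i \<Rightarrow> 'b::idom poly"
  assumes "finite I" "d < card I" "\<And>i j. i \<in> I \<Longrightarrow> d \<le> j \<Longrightarrow> coeff (f i) j = 0"
  shows "\<exists>b. (\<exists>i\<in>I. b i \<noteq> 0) \<and> (\<Sum>i\<in>I. smult (b i) (f i)) = 0"
  using assms
proof (induction d arbitrary: I f)
  case 0
  then have "f i = 0" if "i \<in> I" for i using that by (simp add: poly_eq_iff)
  moreover have "I \<noteq> {}" using "0.prems"(2) by auto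
  ultimately show ?case by (intro exI[of _ "\<lambda>_. 1"]) auto
next
  case (Suc d)
  show ?case
  proof (cases "\<forall>i\<in>I. coeff (f i) d = 0")
    case True
    show ?thesis
    proof (rule Suc.IH)
      show "coeff (f i) j = 0" if "i \<in> I" "d \<le> j" for i j
        using Suc.prems(3)[of i j] True that by (cases "j = d") auto
    qed (use Suc.prems in auto)
  next
    case False
    then obtain i0 where i0: "i0 \<in> I" "coeff (f i0) d \<noteq> 0" by blast
    have "\<exists>b. (\<exists>i\<in>I - {i0}. b i \<noteq> 0) \<and>
        (\<Sum>i\<in>I - {i0}. smult (b i) (smult (coeff (f i0) d) (f i) - smult (coeff (f i) d) (f i0))) = 0"
    proof (rule Suc.IH)
      show "finite (I - {i0})" "d < card (I - {i0})" using Suc.prems(1,2) i0(1) by auto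
      show "coeff (smult (coeff (f i0) d) (f i) - smult (coeff (f i) d) (f i0)) j = 0"
        if "i \<in> I - {i0}" "d \<le> j" for i j
      proof (cases "j = d")
        case False
        then have "Suc d \<le> j" using that(2) by simp
        then show ?thesis using Suc.prems(3) that(1) i0(1) by simp
      qed (simp add: mult.commute)
    qed
    then obtain b where "\<exists>i\<in>I - {i0}. b i \<noteq> 0"
      "(\<Sum>i\<in>I - {i0}. smult (b i) (smult (coeff (f i0) d) (f i) - smult (coeff (f i) d) (f i0))) = 0"
      by blast
    then show ?thesis by (rule dependent_if_eliminated_dependent[OF Suc.prems(1) i0])
  qed
qed

lemma dvd_nontrivial_monom_combination:
  fixes P :: "'b::idom poly"
  assumes "P \<noteq> 0"
  shows "\<exists>b. (\<exists>k\<le>degree P. b k \<noteq> 0) \<and> P dvd (\<Sum>k\<le>degree P. monom (b k) (e k))"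
proof -
  define r where "r k = pseudo_mod (monom 1 (e k)) P" for k
  have "\<forall>k. \<exists>a g. a \<noteq> 0 \<and> smult a (monom 1 (e k)) = P * g + r k"
    using pseudo_mod(1)[OF assms] by (simp add: r_def)
  then obtain a g where ag: "\<And>k. a k \<noteq> 0" "\<And>k. smult (a k) (monom 1 (e k)) = P * g k + r k"
    by metis
  have "coeff (r k) j = 0" if "degree P \<le> j" for k j
    using pseudo_mod(2)[OF assms, of "monom 1 (e k)"] that by (auto simp: r_def coeff_eq_0)
  then obtain c where c: "\<exists>k\<le>degree P. c k \<noteq> 0" "(\<Sum>k\<le>degree P. smult (c k) (r k)) = 0"
    using low_degree_polys_dependent[of "{..degree P}" "degree P" r] by auto
  have "(\<Sum>k\<le>degree P. monom (c k * a k) (e k)) = (\<Sum>k\<le>degree P. smult (c k) (P * g k + r k))"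
    by (simp flip: ag(2) add: smult_monom)
  also have "\<dots> = P * (\<Sum>k\<le>degree P. smult (c k) (g k))"
    using c(2) by (simp add: smult_add_right sum.distrib sum_distrib_left mult_smult_right)
  finally show ?thesis
    using c(1) ag(1) by (intro exI[of _ "\<lambda>k. c k * a k"]) auto
qed

lemma map_poly_add_hom:
  assumes "h 0 = 0" "\<And>a b. h (a + b) = h a + h b"
  shows "map_poly h (p + q) = map_poly h p + map_poly h q"
  by (rule poly_eqI) (simp add: coeff_map_poly assms)

lemma map_poly_mult_hom:
  fixes h :: "'b::comm_semiring_0 \<Rightarrow> 'c::comm_semiring_0"
  assumes "h 0 = 0" "\<And>a b. h (a + b) = h a + h b" "\<And>a b. h (a * b) = h a * h b"
  shows "map_poly h (p * q) = map_poly h p * map_poly h q"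
proof (induction p)
  case (pCons a p)
  have "map_poly h (pCons a p * q) = map_poly h (smult a q + pCons 0 (p * q))" by simp
  also have "\<dots> = smult (h a) (map_poly h q) + pCons 0 (map_poly h p * map_poly h q)"
    by (simp add: map_poly_add_hom map_poly_smult map_poly_pCons assms pCons.IH)
  also have "\<dots> = map_poly h (pCons a p) * map_poly h q"
    by (simp add: map_poly_pCons assms)
  finally show ?case .
qed simp

lemma poly_map_poly_sum_monom:
  fixes h :: "'b::comm_semiring_0 \<Rightarrow> 'c::comm_semiring_1"
  assumes "h 0 = 0" "\<And>a b. h (a + b) = h a + h b"
  shows "poly (map_poly h (\<Sum>k\<in>A. monom (b k) (e k))) x = (\<Sum>k\<in>A. h (b k) * x ^ e k)"
proof (induction A rule: infinite_finite_induct)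
  case (insert k A)
  then show ?case by (simp add: map_poly_add_hom map_poly_monom assms poly_monom)
qed (simp_all add: assms)

lemma poly_map_poly_eq_0_dvd:
  fixes h :: "'b::comm_semiring_1 \<Rightarrow> 'c::comm_semiring_0"
  assumes "h 0 = 0" "\<And>a b. h (a + b) = h a + h b" "\<And>a b. h (a * b) = h a * h b"
    and "poly (map_poly h P) x = 0" "P dvd Q"
  shows "poly (map_poly h Q) x = 0"
proof -
  obtain G where "Q = P * G" using assms(5) by (rule dvdE)
  then show ?thesis using assms(4) by (simp add: map_poly_mult_hom[OF assms(1-3)])
qed

typedef (overloaded) ('a::comm_ring_1) puiseux_series = "{x :: 'a hahn_series. hcoeff x \<in> puiseux}"
  morphisms hahn_of_puiseux Abs_puiseux_series
  by (rule exI[of _ 0]) (simp add: zero_hahn_series.rep_eq puiseux_hzero)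

setup_lifting type_definition_puiseux_series

instantiation puiseux_series :: (comm_ring_1) comm_ring_1
begin

lift_definition zero_puiseux_series :: "'a puiseux_series" is 0
  unfolding mem_Collect_eq zero_hahn_series.rep_eq by (rule puiseux_hzero)
lift_definition one_puiseux_series :: "'a puiseux_series" is 1
  unfolding mem_Collect_eq one_hahn_series.rep_eq by (rule puiseux_hone)
lift_definition plus_puiseux_series :: "'a puiseux_series \<Rightarrow> 'a puiseux_series \<Rightarrow> 'a puiseux_series"
  is "(+)" unfolding mem_Collect_eq plus_hahn_series.rep_eq by (rule puiseux_add)
lift_definition uminus_puiseux_series :: "'a puiseux_series \<Rightarrow> 'a puiseux_series"
  is uminus unfolding mem_Collect_eq uminus_hahn_series.rep_eq by (rule puiseux_uminus)
lift_definition minus_puiseux_series :: "'a puiseux_series \<Rightarrow> 'a puiseux_series \<Rightarrow> 'a puiseux_series"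
  is "(-)" unfolding mem_Collect_eq diff_conv_add_uminus plus_hahn_series.rep_eq uminus_hahn_series.rep_eq
  by (rule puiseux_add[OF _ puiseux_uminus])
lift_definition times_puiseux_series :: "'a puiseux_series \<Rightarrow> 'a puiseux_series \<Rightarrow> 'a puiseux_series"
  is "(*)" unfolding mem_Collect_eq times_hahn_series.rep_eq by (rule puiseux_hmul)

instance
proof
  fix a b c :: "'a puiseux_series"
  show "a * b * c = a * (b * c)" by transfer (rule mult.assoc)
  show "a * b = b * a" by transfer (rule mult.commute)
  show "1 * a = a" by transfer (rule mult_1_left)
  show "(a + b) * c = a * c + b * c" by transfer (rule distrib_right)
  show "a + b + c = a + (b + c)" by transfer (rule add.assoc)
  show "a + b = b + a" by transfer (rule add.commute)
  show "0 + a = a" by transfer (rule add_0_left)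
  show "- a + a = 0" by transfer (rule left_minus)
  show "a - b = a + - b" by transfer (rule diff_conv_add_uminus)
  show "(0 :: 'a puiseux_series) \<noteq> 1" by transfer (rule zero_neq_one)
qed

end

instance puiseux_series :: (idom) idom
  by standard (transfer, rule no_zero_divisors)

lemmas hahn_of_puiseux_hom = zero_puiseux_series.rep_eq plus_puiseux_series.rep_eq times_puiseux_series.rep_eq

lemma hsum_if_atMost:
  fixes d :: nat
  shows "hsum (\<lambda>i. if i \<le> d then F i else hzero) q = (\<Sum>i\<le>d. F i q)"
proof -
  have "hsum (\<lambda>i. if i \<le> d then F i else hzero) q = (\<Sum>i\<le>d. (if i \<le> d then F i else hzero) q)"
    unfolding hsum_def by (rule sum.mono_neutral_left) (auto simp: hzero_def split: if_splits)
  then show ?thesis by simp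
qed

lemma hpow_hcoeff: "hpow (hcoeff x) n = hcoeff (x ^ n)"
  by (induction n) (simp_all add: one_hahn_series.rep_eq hcoeff_mult)

lemma transcendental_over_puiseuxI:
  fixes x :: "'a::comm_ring_1 hahn_series"
  assumes "\<And>P :: 'a puiseux_series poly. P \<noteq> 0 \<Longrightarrow> poly (map_poly hahn_of_puiseux P) x \<noteq> 0"
  shows "transcendental_over_puiseux (hcoeff x)"
  unfolding transcendental_over_puiseux_def
proof (intro allI impI notI)
  fix c :: "nat \<Rightarrow> rat \<Rightarrow> 'a" and d
  assume c: "(\<forall>i\<le>d. c i \<in> puiseux) \<and> (\<exists>i\<le>d. c i \<noteq> hzero)"
    and root: "hsum (\<lambda>i. if i \<le> d then hmul (c i) (hpow (hcoeff x) i) else hzero) = hzero"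
  define C where "C i = Abs_puiseux_series (Abs_hahn_series (c i))" for i
  have hcoeff_C: "hcoeff (hahn_of_puiseux (C i)) = c i" if "i \<le> d" for i
    using c that by (simp add: C_def Abs_puiseux_series_inverse Abs_hahn_series_inverse puiseux_hahn)
  define P where "P = (\<Sum>i\<le>d. monom (C i) i)"
  obtain i0 where "i0 \<le> d" "c i0 \<noteq> hzero" using c by blast
  then have "coeff P i0 \<noteq> 0"
    using hcoeff_C[of i0] by (auto simp: P_def coeff_sum zero_puiseux_series.rep_eq zero_hahn_series.rep_eq)
  then have "P \<noteq> 0" by auto
  moreover have "poly (map_poly hahn_of_puiseux P) x = (\<Sum>i\<le>d. hahn_of_puiseux (C i) * x ^ i)"
    unfolding P_def by (rule poly_map_poly_sum_monom) (simp_all add: hahn_of_puiseux_hom)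
  moreover have "(\<Sum>i\<le>d. hahn_of_puiseux (C i) * x ^ i) = 0"
  proof (rule hahn_series_eqI)
    fix q
    have "hcoeff (\<Sum>i\<le>d. hahn_of_puiseux (C i) * x ^ i) q =
        hsum (\<lambda>i. if i \<le> d then hmul (c i) (hpow (hcoeff x) i) else hzero) q"
      by (simp add: hcoeff_sum hcoeff_mult hcoeff_C hpow_hcoeff hsum_if_atMost)
    then show "hcoeff (\<Sum>i\<le>d. hahn_of_puiseux (C i) * x ^ i) q = hcoeff 0 q"
      by (simp add: root hzero_def)
  qed
  ultimately show False using assms by metis
qed

lemma s_hahn_not_root:
  fixes P :: "'a::idom puiseux_series poly"
  assumes "prime p" "CHAR('a) = p" "P \<noteq> 0"
  shows "poly (map_poly hahn_of_puiseux P) (s_hahn p) \<noteq> 0"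
proof
  assume root: "poly (map_poly hahn_of_puiseux P) (s_hahn p) = 0"
  obtain b where b: "\<exists>k\<le>degree P. b k \<noteq> 0" "P dvd (\<Sum>k\<le>degree P. monom (b k) (p ^ k))"
    using dvd_nontrivial_monom_combination[OF assms(3)] by blast
  from poly_map_poly_eq_0_dvd[OF _ _ _ root b(2)]
  have "(\<Sum>k\<le>degree P. hahn_of_puiseux (b k) * s_hahn p ^ p ^ k) = 0"
    by (simp add: hahn_of_puiseux_hom poly_map_poly_sum_monom)
  then have "\<forall>k\<le>degree P. hahn_of_puiseux (b k) = 0"
    using hahn_of_puiseux by (intro s_hahn_frobenius_powers_independent[OF assms(1,2)]) auto
  then show False using b(1) by (metis hahn_of_puiseux_inject zero_puiseux_series.rep_eq)
qed

theorem corollary2p3: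
  fixes p :: nat
  assumes "prime p"
    and "CHAR('a::alg_closed_field) = p"
    and "\<forall>x::'a. \<exists>P :: 'a poly. P \<noteq> 0 \<and> (\<forall>i. coeff P i \<in> range of_nat) \<and> poly P x = 0"
  shows "(s_ser p :: rat \<Rightarrow> 'a) \<in> hahn \<and> transcendental_over_puiseux (s_ser p :: rat \<Rightarrow> 'a)"
proof
  show "(s_ser p :: rat \<Rightarrow> 'a) \<in> hahn" by (rule s_ser_hahn)
  have "transcendental_over_puiseux (hcoeff (s_hahn p :: 'a hahn_series))"
    by (rule transcendental_over_puiseuxI) (rule s_hahn_not_root[OF assms(1,2)])
  then show "transcendental_over_puiseux (s_ser p :: rat \<Rightarrow> 'a)" by (simp add: s_hahn.rep_eq)
qed

end
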